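(* Let $N\in\mathbb{N}=\{1,2,\ldots\}$. (i) For any $k\in\mathbb{Z}_+=\{0,1,2,\ldots\}$ and $s\in\mathbb{R}$, there exists a constant $\gamma_N^{s,k}\ge 0$ such that $$\bigl(|x|_N^{k-s}\,|\nabla_N^k[|x|_N^s]|_{N^k}\bigr)^2=\gamma_N^{s,k}\quad\text{for all } x\in\mathbb{R}^N\setminus\{0\}.$$ (ii) For any $k\in\mathbb{N}$, there exists a constant $\ell_N^k>0$ such that $$\bigl(|x|_N^{k}\,|\nabla_N^k[\log|x|_N]|_{N^k}\bigr)^2=\ell_N^k\quad\text{for all } x\in\mathbb{R}^N\setminus\{0\}.$$
   Context: $|x|_N=(x_1^2+\cdots+x_N^2)^{1/2}$ is the Euclidean norm on $\mathbb{R}^N$; $\log$ is the natural logarithm. Let $I_N=\{1,\ldots,N\}$. For $i=(i_1,\ldots,i_k)\in I_N^k$ put $D_i=\frac{\partial}{\partial x_{i_1}}\cdots\frac{\partial}{\partial x_{i_k}}$. For a smooth real function $u$ on a domain $\Omega\subset\mathbb{R}^N$, $\nabla_N^k u(x)=(D_iu(x))_{i\in I_N^k}$ and $|\nabla_N^k u(x)|_{N^k}=\bigl(\sum_{i\in I_N^k}(D_iu(x))^2\bigr)^{1/2}$ (sum over all ordered $k$-tuples of indices); for $k=0$, $|\nabla_N^0u(x)|_1=|u(x)|$. *)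

theory Defs
  imports "HOL-Analysis.Analysis"
begin

definition partial_coord :: "'n::finite \<Rightarrow> (real^'n \<Rightarrow> real) \<Rightarrow> real^'n \<Rightarrow> real" where
  "partial_coord i f x = deriv (\<lambda>t. f (x + t *\<^sub>R axis i 1)) 0"

fun Dmulti :: "'n::finite list \<Rightarrow> (real^'n \<Rightarrow> real) \<Rightarrow> real^'n \<Rightarrow> real" where
  "Dmulti [] f = f"
| "Dmulti (i # is) f = partial_coord i (Dmulti is f)"

definition grad_norm :: "nat \<Rightarrow> (real^'n::finite \<Rightarrow> real) \<Rightarrow> real^'n \<Rightarrow> real" where
  "grad_norm k f x = sqrt (\<Sum>is\<in>{is :: 'n list. length is = k}. (Dmulti is f x)\<^sup>2)"

end

theory Submission
  imports Defs
begin

text \<open>Let F(x) be the squared norm of the k-th gradient of f = |x|^s (or of f = log |x|, with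
  s = 0). The chain rule for a linear map Q acts on the k-th derivative tensor by Q in every slot,
  so F is invariant under orthogonal maps because f is. Since f(c y) = c^s f(y) + const for
  c > 0, the k-th derivatives are homogeneous of degree s - k (the constant disappears once
  k \<ge> 1). Hence |x|^(2k - 2s) F(x) depends only on x / |x|, so it is constant. For the
  logarithm the constant is positive because the k-th derivative along e_1 at e_1 is
  (-1)^(k-1) (k-1)!.\<close>

text \<open>Expressions whose symbolic partial derivatives stay in the same class; they certify that all
  iterated partials of |x|^s and log |x| exist and are differentiable away from the origin.\<close>
datatype 'n rexpr =
  Const real | Coord 'n | Norm_powr real | Ln_norm | Add "'n rexpr" "'n rexpr" | Mult "'n rexpr" "'n rexpr"

fun rexpr_eval :: "'n::finite rexpr \<Rightarrow> real^'n \<Rightarrow> real" where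
  "rexpr_eval (Const c) x = c"
| "rexpr_eval (Coord j) x = x $ j"
| "rexpr_eval (Norm_powr a) x = norm x powr a"
| "rexpr_eval Ln_norm x = ln (norm x)"
| "rexpr_eval (Add e1 e2) x = rexpr_eval e1 x + rexpr_eval e2 x"
| "rexpr_eval (Mult e1 e2) x = rexpr_eval e1 x * rexpr_eval e2 x"

fun rexpr_partial :: "'n::finite \<Rightarrow> 'n rexpr \<Rightarrow> 'n rexpr" where
  "rexpr_partial i (Const c) = Const 0"
| "rexpr_partial i (Coord j) = Const (if i = j then 1 else 0)"
| "rexpr_partial i (Norm_powr a) = Mult (Const a) (Mult (Coord i) (Norm_powr (a - 2)))"
| "rexpr_partial i Ln_norm = Mult (Coord i) (Norm_powr (- 2))"
| "rexpr_partial i (Add e1 e2) = Add (rexpr_partial i e1) (rexpr_partial i e2)"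
| "rexpr_partial i (Mult e1 e2) =
     Add (Mult (rexpr_partial i e1) e2) (Mult e1 (rexpr_partial i e2))"

fun rexpr_partials :: "'n::finite list \<Rightarrow> 'n rexpr \<Rightarrow> 'n rexpr" where
  "rexpr_partials [] e = e"
| "rexpr_partials (i # is) e = rexpr_partial i (rexpr_partials is e)"

lemma inner_vec_eq_sum: "(x::real^'n::finite) \<bullet> h = (\<Sum>j\<in>UNIV. h$j * x$j)"
  by (simp add: inner_vec_def mult.commute)

lemma sum_axis_mult: "(\<Sum>j\<in>UNIV. (axis i 1 :: real^'n::finite) $ j * g j) = g i"
proof -
  have "\<And>j. (axis i 1 :: real^'n) $ j * g j = (if j = i then g j else 0)"
    by (simp add: axis_def)
  then show ?thesis by simp
qed

lemma has_derivative_rexpr_eval: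
  fixes x :: "real^'n::finite"
  assumes "x \<noteq> 0"
  shows "(rexpr_eval e has_derivative (\<lambda>h. \<Sum>j\<in>UNIV. h$j * rexpr_eval (rexpr_partial j e) x)) (at x)"
proof (induction e)
  case (Const c)
  then show ?case by simp
next
  case (Coord k)
  have "(\<lambda>h. \<Sum>j\<in>UNIV. h$j * rexpr_eval (rexpr_partial j (Coord k)) x) = (\<lambda>h::real^'n. h $ k)"
  proof
    fix h :: "real^'n"
    have "\<And>j. h$j * rexpr_eval (rexpr_partial j (Coord k)) x = (if j = k then h$j else 0)"
      by simp
    then show "(\<Sum>j\<in>UNIV. h$j * rexpr_eval (rexpr_partial j (Coord k)) x) = h $ k"
      by simp
  qed
  moreover have "((\<lambda>y::real^'n. y $ k) has_derivative (\<lambda>h. h $ k)) (at x)"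
    by (rule bounded_linear.has_derivative[OF bounded_linear_vec_nth has_derivative_ident])
  ultimately show ?case by simp
next
  case (Norm_powr a)
  have n: "norm x > 0" using assms by simp
  have "norm x powr (a - 2) = norm x powr a / (norm x)^2"
    using n by (simp add: powr_diff powr_realpow)
  then have "((\<lambda>y. norm y powr a) has_derivative (\<lambda>h. a * norm x powr (a - 2) * (x \<bullet> h))) (at x)"
    using has_derivative_norm[OF assms] n
    by (auto intro!: derivative_eq_intros
        simp: assms sgn_div_norm inner_commute power2_eq_square field_simps)
  moreover have "(\<lambda>h. a * norm x powr (a - 2) * (x \<bullet> h))
      = (\<lambda>h. \<Sum>j\<in>UNIV. h$j * rexpr_eval (rexpr_partial j (Norm_powr a)) x)"
    by (simp add: inner_vec_eq_sum sum_distrib_left mult_ac)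
  ultimately show ?case by simp
next
  case Ln_norm
  have n: "norm x > 0" using assms by simp
  have "norm x powr (- 2) = 1 / (norm x)^2"
    using n by (simp add: powr_minus powr_realpow divide_inverse)
  then have "((\<lambda>y. ln (norm y)) has_derivative (\<lambda>h. norm x powr (- 2) * (x \<bullet> h))) (at x)"
    using has_derivative_norm[OF assms] n
    by (auto intro!: derivative_eq_intros
        simp: assms sgn_div_norm inner_commute power2_eq_square field_simps)
  moreover have "(\<lambda>h. norm x powr (- 2) * (x \<bullet> h))
      = (\<lambda>h. \<Sum>j\<in>UNIV. h$j * rexpr_eval (rexpr_partial j Ln_norm) x)"
    by (simp add: inner_vec_eq_sum sum_distrib_left mult_ac)
  ultimately show ?case by simp
next
  case (Add e1 e2)
  show ?case using has_derivative_add[OF Add.IH]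
    by (simp add: sum.distrib distrib_left)
next
  case (Mult e1 e2)
  have "(\<lambda>h. rexpr_eval e1 x * (\<Sum>j\<in>UNIV. h$j * rexpr_eval (rexpr_partial j e2) x)
          + (\<Sum>j\<in>UNIV. h$j * rexpr_eval (rexpr_partial j e1) x) * rexpr_eval e2 x)
     = (\<lambda>h. \<Sum>j\<in>UNIV. h$j * rexpr_eval (rexpr_partial j (Mult e1 e2)) x)"
    by (simp add: sum_distrib_left sum_distrib_right sum.distrib[symmetric] algebra_simps)
  then show ?case using has_derivative_mult[OF Mult.IH] by simp
qed

lemma partial_coord_cong_open:
  fixes g h :: "real^'n::finite \<Rightarrow> real"
  assumes "open U" "x \<in> U" "\<And>y. y \<in> U \<Longrightarrow> g y = h y"
  shows "partial_coord i g x = partial_coord i h x"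
  unfolding partial_coord_def
proof (rule deriv_cong_ev)
  have "((\<lambda>t::real. x + t *\<^sub>R axis i 1) \<longlongrightarrow> x + 0 *\<^sub>R axis i 1) (nhds 0)"
    by (intro tendsto_intros filterlim_ident)
  then have "eventually (\<lambda>t. x + t *\<^sub>R axis i 1 \<in> U) (nhds 0)"
    using assms(1,2) by (intro topological_tendstoD) simp_all
  then show "eventually (\<lambda>t. g (x + t *\<^sub>R axis i 1) = h (x + t *\<^sub>R axis i 1)) (nhds 0)"
    by eventually_elim (simp add: assms(3))
qed simp

lemma partial_coordI:
  assumes "((\<lambda>t. f (x + t *\<^sub>R axis i 1)) has_real_derivative D) (at 0)"
  shows "partial_coord i f x = D"
  unfolding partial_coord_def using assms by (rule DERIV_imp_deriv)

lemma has_real_derivative_along_line: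
  fixes f :: "real^'n::finite \<Rightarrow> real"
  assumes "(f has_derivative (\<lambda>h. \<Sum>j\<in>UNIV. h$j * g j)) (at x)"
  shows "((\<lambda>t. f (x + t *\<^sub>R v)) has_real_derivative (\<Sum>j\<in>UNIV. v$j * g j)) (at 0)"
proof -
  have "((\<lambda>t::real. x + t *\<^sub>R v) has_derivative (\<lambda>t. t *\<^sub>R v)) (at 0)"
    by (auto intro!: derivative_eq_intros)
  moreover have "(f has_derivative (\<lambda>h. \<Sum>j\<in>UNIV. h$j * g j)) (at (x + 0 *\<^sub>R v))"
    using assms by simp
  ultimately have "((\<lambda>t. f (x + t *\<^sub>R v)) has_derivative (\<lambda>t. \<Sum>j\<in>UNIV. (t *\<^sub>R v)$j * g j)) (at 0)"
    by (rule has_derivative_compose[unfolded o_def])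
  moreover have "(\<lambda>t. \<Sum>j\<in>UNIV. (t *\<^sub>R v)$j * g j) = (*) (\<Sum>j\<in>UNIV. v$j * g j)"
    by (auto simp: sum_distrib_left mult_ac)
  ultimately show ?thesis
    by (simp add: has_field_derivative_def)
qed

lemma partial_coord_of_has_derivative:
  fixes f :: "real^'n::finite \<Rightarrow> real"
  assumes "(f has_derivative (\<lambda>h. \<Sum>j\<in>UNIV. h$j * g j)) (at x)"
  shows "partial_coord i f x = g i"
  using has_real_derivative_along_line[OF assms, of "axis i 1"]
  by (intro partial_coordI) (simp add: sum_axis_mult)

lemma Dmulti_rexpr_eval:
  "(x::real^'n::finite) \<noteq> 0 \<Longrightarrow> Dmulti is (rexpr_eval e) x = rexpr_eval (rexpr_partials is e) x"
proof (induction "is" arbitrary: x)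
  case Nil
  then show ?case by simp
next
  case (Cons i "is")
  have "Dmulti (i # is) (rexpr_eval e) x = partial_coord i (rexpr_eval (rexpr_partials is e)) x"
    by (simp, rule partial_coord_cong_open[of "-{0}"]) (use Cons in auto)
  also have "\<dots> = rexpr_eval (rexpr_partials (i # is) e) x"
    by (simp add: partial_coord_of_has_derivative[OF has_derivative_rexpr_eval[OF Cons.prems]])
  finally show ?case .
qed

definition smooth_off_origin :: "(real^'n::finite \<Rightarrow> real) \<Rightarrow> bool" where
  "smooth_off_origin f \<longleftrightarrow> (\<forall>is x. x \<noteq> 0 \<longrightarrow>
     (Dmulti is f has_derivative (\<lambda>h. \<Sum>j\<in>UNIV. h$j * Dmulti (j # is) f x)) (at x))"

lemma smooth_off_origin_rexpr_eval: "smooth_off_origin (rexpr_eval (e :: 'n::finite rexpr))"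
  unfolding smooth_off_origin_def
proof (intro allI impI)
  fix "is" and x :: "real^'n"
  assume x: "x \<noteq> 0"
  have "(rexpr_eval (rexpr_partials is e) has_derivative
          (\<lambda>h. \<Sum>j\<in>UNIV. h$j * Dmulti (j # is) (rexpr_eval e) x)) (at x)"
    using has_derivative_rexpr_eval[OF x, of "rexpr_partials is e"]
      Dmulti_rexpr_eval[OF x, of "_ # is" e]
    by simp
  then show "(Dmulti is (rexpr_eval e) has_derivative
      (\<lambda>h. \<Sum>j\<in>UNIV. h$j * Dmulti (j # is) (rexpr_eval e) x)) (at x)"
    by (rule has_derivative_transform_within_open[of _ _ _ _ "-{0}"])
      (use x in \<open>auto simp: Dmulti_rexpr_eval\<close>)
qed

lemma smooth_off_origin_norm_powr: "smooth_off_origin (\<lambda>y::real^'n::finite. norm y powr s)"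
  using smooth_off_origin_rexpr_eval[of "Norm_powr s"] by (simp add: rexpr_eval.simps(3)[abs_def])

lemma smooth_off_origin_ln_norm: "smooth_off_origin (\<lambda>y::real^'n::finite. ln (norm y))"
  using smooth_off_origin_rexpr_eval[of Ln_norm] by (simp add: rexpr_eval.simps(4)[abs_def])

lemma smooth_off_origin_along_line:
  assumes "smooth_off_origin f" "(x::real^'n::finite) \<noteq> 0"
  shows "((\<lambda>t. Dmulti is f (x + t *\<^sub>R v)) has_real_derivative
           (\<Sum>j\<in>UNIV. v$j * Dmulti (j # is) f x)) (at 0)"
  using assms unfolding smooth_off_origin_def by (intro has_real_derivative_along_line) blast

definition index_tuples :: "nat \<Rightarrow> 'n list set" where
  "index_tuples k = {is. length is = k}"

lemma finite_index_tuples: "finite (index_tuples k :: 'n::finite list set)"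
  using finite_lists_length_eq[of "UNIV :: 'n set" k] by (simp add: index_tuples_def)

lemma index_tuples_0: "index_tuples 0 = {[]}"
  by (auto simp: index_tuples_def)

lemma sum_index_tuples_Suc:
  "(\<Sum>js\<in>index_tuples (Suc k). g js) = (\<Sum>j\<in>(UNIV::'n::finite set). \<Sum>js\<in>index_tuples k. g (j # js))"
proof -
  have inj: "inj_on (\<lambda>(j, js). j # js) (UNIV \<times> (index_tuples k :: 'n list set))"
    by (auto simp: inj_on_def)
  have "index_tuples (Suc k) = (\<lambda>(j, js). j # js) ` (UNIV \<times> (index_tuples k :: 'n list set))"
    unfolding index_tuples_def by (auto simp: length_Suc_conv image_iff)
  then have "(\<Sum>js\<in>index_tuples (Suc k). g js) = (\<Sum>(j, js)\<in>UNIV \<times> index_tuples k. g (j # js))"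
    using sum.reindex[OF inj, of g] by (simp add: o_def case_prod_unfold)
  then show ?thesis
    by (simp add: sum.cartesian_product)
qed

text \<open>\<open>chain_coeff Q [i\<^sub>1,...,i\<^sub>k] [j\<^sub>1,...,j\<^sub>k] = Q\<^sub>j\<^sub>1\<^sub>i\<^sub>1 \<cdots> Q\<^sub>j\<^sub>k\<^sub>i\<^sub>k\<close>, the entries of the
  k-fold tensor power of the matrix of Q.\<close>
fun chain_coeff :: "(real^'n::finite \<Rightarrow> real^'n) \<Rightarrow> 'n list \<Rightarrow> 'n list \<Rightarrow> real" where
  "chain_coeff Q [] [] = 1"
| "chain_coeff Q (i # is) (j # js) = Q (axis i 1) $ j * chain_coeff Q is js"
| "chain_coeff Q _ _ = 0"

lemma Dmulti_compose_linear:
  fixes f :: "real^'n::finite \<Rightarrow> real"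
  assumes f: "smooth_off_origin f" and Q: "linear Q" "inj Q" and x: "x \<noteq> 0"
  shows "Dmulti is (\<lambda>y. f (Q y)) x
           = (\<Sum>js\<in>index_tuples (length is). chain_coeff Q is js * Dmulti js f (Q x))"
  using x
proof (induction "is" arbitrary: x)
  case Nil
  then show ?case by (simp add: index_tuples_0)
next
  case (Cons i "is")
  let ?J = "index_tuples (length is) :: 'n list set"
  let ?D = "\<Sum>js\<in>?J. chain_coeff Q is js * (\<Sum>j\<in>UNIV. Q (axis i 1) $ j * Dmulti (j # js) f (Q x))"
  have Qx: "Q x \<noteq> 0"
    using Cons.prems Q by (metis linear_0 injD)
  have "((\<lambda>t. \<Sum>js\<in>?J. chain_coeff Q is js * Dmulti js f (Q x + t *\<^sub>R Q (axis i 1)))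
          has_real_derivative ?D) (at 0)"
    by (intro DERIV_sum DERIV_cmult smooth_off_origin_along_line[OF f Qx])
  moreover have "\<And>t. Q (x + t *\<^sub>R axis i 1) = Q x + t *\<^sub>R Q (axis i 1)"
    using Q(1) by (simp add: linear_add linear_scale)
  ultimately have "partial_coord i (\<lambda>y. \<Sum>js\<in>?J. chain_coeff Q is js * Dmulti js f (Q y)) x = ?D"
    by (intro partial_coordI) presburger
  moreover have "Dmulti (i # is) (\<lambda>y. f (Q y)) x
      = partial_coord i (\<lambda>y. \<Sum>js\<in>?J. chain_coeff Q is js * Dmulti js f (Q y)) x"
    by (simp, rule partial_coord_cong_open[of "-{0}"]) (use Cons in auto)
  ultimately have "Dmulti (i # is) (\<lambda>y. f (Q y)) x = ?D"
    by simp
  also have "\<dots> = (\<Sum>j\<in>UNIV. \<Sum>js\<in>?J. chain_coeff Q (i # is) (j # js) * Dmulti (j # js) f (Q x))"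
    unfolding sum_distrib_left by (subst sum.swap) (simp add: mult_ac)
  also have "\<dots> = (\<Sum>js\<in>index_tuples (length (i # is)). chain_coeff Q (i # is) js * Dmulti js f (Q x))"
    by (simp add: sum_index_tuples_Suc)
  finally show ?case .
qed

lemma orthogonal_transformation_rows_orthonormal:
  fixes Q :: "real^'n::finite \<Rightarrow> real^'n"
  assumes "orthogonal_transformation Q"
  shows "(\<Sum>i\<in>UNIV. Q (axis i 1) $ j * Q (axis i 1) $ k) = (if j = k then 1 else 0)"
proof -
  have "matrix Q ** transpose (matrix Q) = mat 1"
    using assms orthogonal_transformation_matrix orthogonal_matrix_def by blast
  then have "(matrix Q ** transpose (matrix Q)) $ j $ k = mat 1 $ j $ k" by simp
  then show ?thesis by (simp add: matrix_matrix_mult_def transpose_def matrix_def mat_def)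
qed

lemma chain_coeff_orthonormal:
  fixes Q :: "real^'n::finite \<Rightarrow> real^'n"
  assumes Q: "orthogonal_transformation Q"
  shows "js \<in> index_tuples k \<Longrightarrow> ks \<in> index_tuples k \<Longrightarrow>
    (\<Sum>is\<in>index_tuples k. chain_coeff Q is js * chain_coeff Q is ks) = (if js = ks then 1 else 0)"
proof (induction k arbitrary: js ks)
  case 0
  then show ?case by (simp add: index_tuples_0)
next
  case (Suc k)
  then obtain j js' l ks' where js: "js = j # js'" "js' \<in> index_tuples k"
    and ks: "ks = l # ks'" "ks' \<in> index_tuples k"
    by (auto simp: index_tuples_def length_Suc_conv)
  have "(\<Sum>is\<in>index_tuples (Suc k). chain_coeff Q is js * chain_coeff Q is ks)
      = (\<Sum>i\<in>UNIV. \<Sum>is\<in>index_tuples k.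
           (Q (axis i 1) $ j * Q (axis i 1) $ l) * (chain_coeff Q is js' * chain_coeff Q is ks'))"
    by (simp add: sum_index_tuples_Suc js ks mult_ac)
  also have "\<dots> = (\<Sum>i\<in>UNIV. Q (axis i 1) $ j * Q (axis i 1) $ l)
        * (\<Sum>is\<in>index_tuples k. chain_coeff Q is js' * chain_coeff Q is ks')"
    by (simp only: sum_distrib_left[symmetric] sum_distrib_right[symmetric])
  finally show ?case
    by (simp add: orthogonal_transformation_rows_orthonormal[OF Q] Suc.IH js ks)
qed

lemma sum_squares_chain_coeff_orthogonal:
  fixes Q :: "real^'n::finite \<Rightarrow> real^'n"
  assumes Q: "orthogonal_transformation Q"
  shows "(\<Sum>is\<in>index_tuples k. (\<Sum>js\<in>index_tuples k. chain_coeff Q is js * a js)\<^sup>2)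
       = (\<Sum>js\<in>index_tuples k. (a js)\<^sup>2)"
proof -
  have "(\<Sum>is\<in>index_tuples k. (\<Sum>js\<in>index_tuples k. chain_coeff Q is js * a js)\<^sup>2)
     = (\<Sum>is\<in>index_tuples k. \<Sum>js\<in>index_tuples k. \<Sum>ks\<in>index_tuples k.
          (chain_coeff Q is js * chain_coeff Q is ks) * (a js * a ks))"
    by (simp add: power2_eq_square sum_product mult_ac)
  also have "\<dots> = (\<Sum>js\<in>index_tuples k. \<Sum>ks\<in>index_tuples k.
          (\<Sum>is\<in>index_tuples k. chain_coeff Q is js * chain_coeff Q is ks) * (a js * a ks))"
    unfolding sum_distrib_right by (subst sum.swap) (rule sum.cong[OF refl], rule sum.swap)
  also have "\<dots> = (\<Sum>js\<in>index_tuples k. \<Sum>ks\<in>index_tuples k. if js = ks then a js * a ks else 0)"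
    by (intro sum.cong refl) (simp add: chain_coeff_orthonormal[OF Q])
  also have "\<dots> = (\<Sum>js\<in>index_tuples k. (a js)\<^sup>2)"
    by (simp add: finite_index_tuples power2_eq_square)
  finally show ?thesis .
qed

lemma chain_coeff_scaleR:
  "chain_coeff (\<lambda>y. c *\<^sub>R y) is js = (if is = js then c ^ length is else 0)"
proof (induction "is" arbitrary: js)
  case Nil
  then show ?case by (cases js) auto
next
  case (Cons i "is")
  then show ?case by (cases js) (auto simp: axis_def)
qed

lemma Dmulti_compose_scaleR:
  fixes f :: "real^'n::finite \<Rightarrow> real"
  assumes f: "smooth_off_origin f" and c: "c > 0" and x: "x \<noteq> 0"
  shows "Dmulti is (\<lambda>y. f (c *\<^sub>R y)) x = c ^ length is * Dmulti is f (c *\<^sub>R x)"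
proof -
  have inj: "inj (\<lambda>y::real^'n. c *\<^sub>R y)"
    using c by (auto intro: injI)
  have "Dmulti is (\<lambda>y. f (c *\<^sub>R y)) x
      = (\<Sum>js\<in>index_tuples (length is). if is = js then c ^ length is * Dmulti js f (c *\<^sub>R x) else 0)"
    unfolding Dmulti_compose_linear[OF f linear_scaleR inj x]
    by (rule sum.cong) (auto simp: chain_coeff_scaleR)
  also have "\<dots> = c ^ length is * Dmulti is f (c *\<^sub>R x)"
    by (subst sum.delta'[OF finite_index_tuples]) (simp add: index_tuples_def)
  finally show ?thesis .
qed

lemma Dmulti_affine:
  fixes f h :: "real^'n::finite \<Rightarrow> real"
  assumes f: "smooth_off_origin f" and h: "\<And>y. y \<noteq> 0 \<Longrightarrow> h y = a * f y + b"
  shows "x \<noteq> 0 \<Longrightarrow> Dmulti is h x = a * Dmulti is f x + (if is = [] then b else 0)"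
proof (induction "is" arbitrary: x)
  case Nil
  then show ?case by (simp add: h)
next
  case (Cons i "is")
  define b' where "b' = (if is = [] then b else 0)"
  have "((\<lambda>t. a * Dmulti is f (x + t *\<^sub>R axis i 1) + b') has_real_derivative
          a * Dmulti (i # is) f x + 0) (at 0)"
    using smooth_off_origin_along_line[OF f Cons.prems, of "is" "axis i 1"]
    by (intro DERIV_add DERIV_cmult DERIV_const) (simp add: sum_axis_mult)
  then have "partial_coord i (\<lambda>y. a * Dmulti is f y + b') x = a * Dmulti (i # is) f x"
    by (simp add: partial_coordI)
  moreover have "partial_coord i (Dmulti is h) x = partial_coord i (\<lambda>y. a * Dmulti is f y + b') x"
    by (rule partial_coord_cong_open[of "-{0}"]) (use Cons in \<open>auto simp: b'_def\<close>)
  ultimately show ?case by simp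
qed

definition grad_sq :: "(real^'n::finite \<Rightarrow> real) \<Rightarrow> nat \<Rightarrow> real^'n \<Rightarrow> real" where
  "grad_sq f k x = (\<Sum>is\<in>index_tuples k. (Dmulti is f x)\<^sup>2)"

lemma grad_sq_nonneg: "grad_sq f k x \<ge> 0"
  unfolding grad_sq_def by (simp add: sum_nonneg)

lemma grad_norm_eq_sqrt_grad_sq: "grad_norm k f x = sqrt (grad_sq f k x)"
  unfolding grad_norm_def grad_sq_def index_tuples_def by simp

lemma grad_sq_orthogonal_invariant:
  fixes f :: "real^'n::finite \<Rightarrow> real"
  assumes f: "smooth_off_origin f" and Q: "orthogonal_transformation Q"
    and inv: "\<And>y. f (Q y) = f y" and x: "x \<noteq> 0"
  shows "grad_sq f k (Q x) = grad_sq f k x"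
proof -
  have "inj Q"
    using Q by (metis orthogonal_transformation_inj)
  then have "Dmulti is f x = (\<Sum>js\<in>index_tuples k. chain_coeff Q is js * Dmulti js f (Q x))"
    if "is \<in> index_tuples k" for "is"
    using Dmulti_compose_linear[OF f orthogonal_transformation_linear[OF Q] _ x, of "is"] inv that
    by (simp add: index_tuples_def)
  then show ?thesis
    unfolding grad_sq_def by (simp add: sum_squares_chain_coeff_orthogonal[OF Q])
qed

lemma grad_sq_scaleR:
  fixes f :: "real^'n::finite \<Rightarrow> real"
  assumes f: "smooth_off_origin f"
    and hom: "\<And>c y. c > 0 \<Longrightarrow> y \<noteq> 0 \<Longrightarrow> f (c *\<^sub>R y) = c powr s * f y + b c"
    and kb: "k > 0 \<or> (\<forall>c. b c = 0)"
    and c: "c > 0" and y: "y \<noteq> 0"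
  shows "grad_sq f k (c *\<^sub>R y) = c powr (2 * (s - real k)) * grad_sq f k y"
proof -
  have "Dmulti is f (c *\<^sub>R y) = c powr (s - real k) * Dmulti is f y"
    if "is \<in> index_tuples k" for "is"
  proof -
    have "c ^ k * Dmulti is f (c *\<^sub>R y) = Dmulti is (\<lambda>z. f (c *\<^sub>R z)) y"
      using Dmulti_compose_scaleR[OF f c y, of "is"] that by (simp add: index_tuples_def)
    also have "\<dots> = c powr s * Dmulti is f y + (if is = [] then b c else 0)"
      using hom c y by (intro Dmulti_affine[OF f]) auto
    also have "\<dots> = c powr s * Dmulti is f y"
      using kb that by (auto simp: index_tuples_def)
    finally show ?thesis
      using c by (simp add: powr_diff powr_realpow field_simps)
  qed
  then have "grad_sq f k (c *\<^sub>R y) = (c powr (s - real k))\<^sup>2 * grad_sq f k y"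
    unfolding grad_sq_def by (simp add: sum_distrib_left power_mult_distrib)
  moreover have "(c powr (s - real k))\<^sup>2 = c powr (2 * (s - real k))"
    by (simp add: power2_eq_square powr_add[symmetric])
  ultimately show ?thesis by simp
qed

lemma scaled_grad_norm_constant:
  fixes f :: "real^'n::finite \<Rightarrow> real"
  assumes f: "smooth_off_origin f"
    and inv: "\<And>Q y. orthogonal_transformation Q \<Longrightarrow> f (Q y) = f y"
    and hom: "\<And>c y. c > 0 \<Longrightarrow> y \<noteq> 0 \<Longrightarrow> f (c *\<^sub>R y) = c powr s * f y + b c"
    and kb: "k > 0 \<or> (\<forall>c. b c = 0)"
    and x: "x \<noteq> 0"
  shows "(norm x powr (real k - s) * grad_norm k f x)\<^sup>2 = grad_sq f k (axis i 1)"
proof -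
  define u where "u = x /\<^sub>R norm x"
  have u: "u \<noteq> 0" "x = norm x *\<^sub>R u" "norm x > 0"
    using x by (simp_all add: u_def)
  obtain Q :: "real^'n \<Rightarrow> real^'n" where Q: "orthogonal_transformation Q" "Q u = axis i 1"
    using orthogonal_transformation_exists[of u "axis i 1"] x by (auto simp: u_def)
  have "grad_sq f k x = norm x powr (2 * (s - real k)) * grad_sq f k u"
    using grad_sq_scaleR[OF f hom kb u(3) u(1)] u(2) by simp
  also have "grad_sq f k u = grad_sq f k (axis i 1)"
    using grad_sq_orthogonal_invariant[OF f Q(1) inv[OF Q(1)] u(1)] Q(2) by simp
  finally have "grad_sq f k x = norm x powr (2 * (s - real k)) * grad_sq f k (axis i 1)" .
  moreover have "(norm x powr (real k - s))\<^sup>2 * norm x powr (2 * (s - real k)) = 1"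
    using u(3) by (simp add: power2_eq_square powr_add[symmetric])
  ultimately show ?thesis
    by (simp add: grad_norm_eq_sqrt_grad_sq grad_sq_nonneg power_mult_distrib)
qed

lemma Dmulti_ln_norm_axis:
  fixes i :: "'n::finite"
  assumes "t > 0"
  shows "Dmulti (replicate (Suc m) i) (\<lambda>y. ln (norm y)) (t *\<^sub>R axis i 1) = (-1)^m * fact m / t^(Suc m)"
  using assms
proof (induction m arbitrary: t)
  case 0
  have "t *\<^sub>R axis i 1 \<noteq> (0::real^'n)" using 0 by (simp add: axis_eq_0_iff)
  from Dmulti_rexpr_eval[OF this, of "[i]" Ln_norm] 0 show ?case
    by (simp add: powr_minus powr_realpow power2_eq_square field_simps rexpr_eval.simps(4)[abs_def])
next
  case (Suc m)
  let ?g = "\<lambda>\<tau>::real. (-1)^m * fact m / (t + \<tau>)^(Suc m)"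
  have "((\<lambda>\<tau>. (t + \<tau>)^(Suc m)) has_real_derivative real (Suc m) * t^m) (at 0)"
    using DERIV_power[OF DERIV_add[OF DERIV_const[of t] DERIV_ident], of "Suc m" 0] by simp
  then have "(?g has_real_derivative (0 * (t + 0)^(Suc m) - (-1)^m * fact m * (real (Suc m) * t^m))
      / ((t + 0)^(Suc m) * (t + 0)^(Suc m))) (at 0)"
    by (rule DERIV_divide[OF DERIV_const]) (use Suc.prems in simp)
  moreover have "(0 * (t + 0)^(Suc m) - (-1)^m * fact m * (real (Suc m) * t^m))
      / ((t + 0)^(Suc m) * (t + 0)^(Suc m)) = (-1)^(Suc m) * fact (Suc m) / t^(Suc (Suc m))"
    using Suc.prems by (simp add: field_simps power_add mult_ac)
  ultimately have "(?g has_real_derivative (-1)^(Suc m) * fact (Suc m) / t^(Suc (Suc m))) (at 0)"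
    by simp
  moreover have "eventually (\<lambda>\<tau>. Dmulti (replicate (Suc m) i) (\<lambda>y. ln (norm y))
      (t *\<^sub>R axis i 1 + \<tau> *\<^sub>R axis i 1) = ?g \<tau>) (nhds 0)"
  proof -
    have "eventually (\<lambda>\<tau>. \<tau> \<in> {-t<..}) (nhds (0::real))"
      by (rule eventually_nhds_in_open) (use Suc.prems in auto)
    then show ?thesis
      by eventually_elim (use Suc.IH in \<open>simp add: scaleR_add_left[symmetric]\<close>)
  qed
  ultimately show ?case
    unfolding partial_coord_def replicate_Suc Dmulti.simps
    by (subst deriv_cong_ev) (auto intro: DERIV_imp_deriv)
qed

lemma grad_sq_ln_norm_axis_pos:
  assumes "k \<ge> 1"
  shows "grad_sq (\<lambda>y. ln (norm y)) k (axis i 1 :: real^'n::finite) > 0"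
proof -
  obtain m where m: "k = Suc m" using assms by (cases k) auto
  have "Dmulti (replicate k i) (\<lambda>y. ln (norm y)) (axis i 1 :: real^'n) \<noteq> 0"
    using Dmulti_ln_norm_axis[of 1 m i] by (simp add: m)
  moreover have "(Dmulti (replicate k i) (\<lambda>y. ln (norm y)) (axis i 1 :: real^'n))\<^sup>2
      \<le> grad_sq (\<lambda>y. ln (norm y)) k (axis i 1)"
    unfolding grad_sq_def
    by (rule member_le_sum) (auto simp: finite_index_tuples[unfolded index_tuples_def] index_tuples_def)
  ultimately show ?thesis
    by (metis not_le order.strict_trans1 zero_less_power2)
qed

theorem theorem1p1:
  shows "(\<forall>(k::nat) (s::real). \<exists>\<gamma>::real. \<gamma> \<ge> 0 \<and>
            (\<forall>x::real^'n. x \<noteq> 0 \<longrightarrow>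
               (norm x powr (real k - s) * grad_norm k (\<lambda>y. norm y powr s) x)\<^sup>2 = \<gamma>))
       \<and> (\<forall>k::nat. k \<ge> 1 \<longrightarrow> (\<exists>L::real. L > 0 \<and>
            (\<forall>x::real^'n. x \<noteq> 0 \<longrightarrow>
               (norm x ^ k * grad_norm k (\<lambda>y. ln (norm y)) x)\<^sup>2 = L)))"
proof (intro conjI allI impI)
  fix k :: nat and s :: real and i :: 'n
  have "(norm x powr (real k - s) * grad_norm k (\<lambda>y. norm y powr s) x)\<^sup>2
      = grad_sq (\<lambda>y. norm y powr s) k (axis i 1)" if "x \<noteq> 0" for x :: "real^'n"
    by (rule scaled_grad_norm_constant[OF smooth_off_origin_norm_powr, where b = "\<lambda>_. 0"])
      (use that in \<open>simp_all add: orthogonal_transformation_norm powr_mult\<close>)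
  then show "\<exists>\<gamma>\<ge>0. \<forall>x::real^'n. x \<noteq> 0 \<longrightarrow>
      (norm x powr (real k - s) * grad_norm k (\<lambda>y. norm y powr s) x)\<^sup>2 = \<gamma>"
    using grad_sq_nonneg by blast
next
  fix k :: nat and i :: 'n
  assume k: "k \<ge> 1"
  have "(norm x powr (real k - 0) * grad_norm k (\<lambda>y. ln (norm y)) x)\<^sup>2
      = grad_sq (\<lambda>y. ln (norm y)) k (axis i 1)" if "x \<noteq> 0" for x :: "real^'n"
    by (rule scaled_grad_norm_constant[OF smooth_off_origin_ln_norm, where b = ln])
      (use that k in \<open>simp_all add: orthogonal_transformation_norm ln_mult\<close>)
  then show "\<exists>L>0. \<forall>x::real^'n. x \<noteq> 0 \<longrightarrow> (norm x ^ k * grad_norm k (\<lambda>y. ln (norm y)) x)\<^sup>2 = L"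
    using grad_sq_ln_norm_axis_pos[OF k] by (auto simp: powr_realpow)
qed

end
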